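(* The $(1,2)$ Las Vegas elitist black-box complexity of $\textsc{OneMax}$ is at most $2n+1$, and the corresponding algorithm needs at most $n+1$ generations. For every $\lambda\ge 2$ there are $(1,\lambda)$ Las Vegas and Monte Carlo elitist black-box algorithms that need at most $\lceil n/\lfloor\log_2\lambda\rfloor\rceil$ generations on $\textsc{OneMax}$.
   Context: For $z\in\{0,1\}^n$, $\textsc{Om}_z(x)=n-\sum_{i=1}^n (x_i\oplus z_i)$; $\textsc{OneMax}=\{\textsc{Om}_z : z\in\{0,1\}^n\}$. A $(\mu,\lambda)$ elitist black-box algorithm maintains a multiset $X$ of $\mu$ search points (initially sampled one by one, each from a distribution depending only on previous points and the ranking of their fitness values); in each generation it samples $\lambda$ offspring from a distribution depending only on $X$ and the ranking of the fitness values in $X$ (not the values), learns the ranking of the offspring's fitness values, and the new $X$ must consist of $\mu$ offspring of highest fitness among the $\lambda$ offspring (ties broken arbitrarily; the parents are discarded). Runtime: number of sampled search points until an optimum is sampled for the first time; number of generations counted analogously. Las Vegas complexity: min over algorithms of max over functions of expected runtime. *)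

theory Defs
  imports "HOL-Probability.Probability"
begin

definition om :: "bool list \<Rightarrow> bool list \<Rightarrow> nat" where
  "om z x = length z - card {i. i < length z \<and> x ! i \<noteq> z ! i}"

definition is_opt :: "nat \<Rightarrow> (bool list \<Rightarrow> nat) \<Rightarrow> bool list \<Rightarrow> bool" where
  "is_opt n f x \<longleftrightarrow> length x = n \<and> (\<forall>y. length y = n \<longrightarrow> f y \<le> f x)"

definition rank :: "(bool list \<Rightarrow> nat) \<Rightarrow> bool list list \<Rightarrow> (nat \<times> nat) set" where
  "rank f ys = {(i, j). i < length ys \<and> j < length ys \<and> f (ys ! i) \<le> f (ys ! j)}"

text \<open>A (1,lambda) elitist algorithm: the initial search point is sampled from a fixed
  distribution (there is no information yet); in each generation the lambda offspring
  are sampled from a distribution depending only on the current parent x (the ranking of a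
  single point is trivial); after learning the ranking of the offspring, the algorithm
  selects (possibly randomly, depending on x, the offspring and their ranking) the index
  of the new parent, which must be an offspring of highest fitness. The parent is discarded.\<close>
record alg1 =
  a_init :: "bool list pmf"
  a_off  :: "bool list \<Rightarrow> bool list list pmf"
  a_sel  :: "bool list \<Rightarrow> bool list list \<Rightarrow> (nat \<times> nat) set \<Rightarrow> nat pmf"

definition valid_alg1 :: "nat \<Rightarrow> nat \<Rightarrow> alg1 \<Rightarrow> bool" where
  "valid_alg1 n lam A \<longleftrightarrow>
     (\<forall>x \<in> set_pmf (a_init A). length x = n) \<and>
     (\<forall>x. length x = n \<longrightarrow>
        (\<forall>ys \<in> set_pmf (a_off A x). length ys = lam \<and> (\<forall>y \<in> set ys. length y = n))) \<and>
     (\<forall>x ys (f :: bool list \<Rightarrow> nat). length x = n \<longrightarrow> length ys = lam \<longrightarrow>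
        (\<forall>y \<in> set ys. length y = n) \<longrightarrow>
        set_pmf (a_sel A x ys (rank f ys)) \<subseteq> {i. i < lam \<and> (\<forall>j < lam. f (ys ! j) \<le> f (ys ! i))})"

text \<open>State after t generations: \<open>Inl x\<close> = optimum not yet sampled, current parent x;
  \<open>Inr (r, g)\<close> = an optimum was sampled for the first time as the r-th sampled search point,
  in generation g (g = 0 means the initial search point; generations are counted without
  the initialization). Offspring of a generation are counted in the order in which they
  appear in the sampled list.\<close>

definition step1 :: "nat \<Rightarrow> nat \<Rightarrow> (bool list \<Rightarrow> nat) \<Rightarrow> alg1 \<Rightarrow> nat
    \<Rightarrow> bool list + nat \<times> nat \<Rightarrow> (bool list + nat \<times> nat) pmf" where
  "step1 n lam f A g s = (case s of
     Inr res \<Rightarrow> return_pmf (Inr res)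
   | Inl x \<Rightarrow> bind_pmf (a_off A x) (\<lambda>ys.
       if (\<exists>y \<in> set ys. is_opt n f y)
       then return_pmf (Inr (1 + lam * g + Suc (LEAST i. i < length ys \<and> is_opt n f (ys ! i)), Suc g))
       else map_pmf (\<lambda>i. Inl (ys ! i)) (a_sel A x ys (rank f ys))))"

fun state1 :: "nat \<Rightarrow> nat \<Rightarrow> (bool list \<Rightarrow> nat) \<Rightarrow> alg1 \<Rightarrow> nat \<Rightarrow> (bool list + nat \<times> nat) pmf" where
  "state1 n lam f A 0 = map_pmf (\<lambda>x. if is_opt n f x then Inr (1, 0) else Inl x) (a_init A)"
| "state1 n lam f A (Suc g) = bind_pmf (state1 n lam f A g) (step1 n lam f A g)"

text \<open>\<open>Pr[T \<le> m]\<close> and \<open>Pr[G \<le> k]\<close> for the runtime T and the number of generations G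
  (probability that this has happened within some finite number of generations).\<close>
definition runtime_le :: "nat \<Rightarrow> nat \<Rightarrow> (bool list \<Rightarrow> nat) \<Rightarrow> alg1 \<Rightarrow> nat \<Rightarrow> ennreal" where
  "runtime_le n lam f A m =
     (SUP t. ennreal (measure_pmf.prob (state1 n lam f A t) {s. \<exists>r g. s = Inr (r, g) \<and> r \<le> m}))"

definition gens_le :: "nat \<Rightarrow> nat \<Rightarrow> (bool list \<Rightarrow> nat) \<Rightarrow> alg1 \<Rightarrow> nat \<Rightarrow> ennreal" where
  "gens_le n lam f A k =
     (SUP t. ennreal (measure_pmf.prob (state1 n lam f A t) {s. \<exists>r g. s = Inr (r, g) \<and> g \<le> k}))"

text \<open>Expectations of nonnegative integer random variables: \<open>E[T] = \<Sum>_{m\<ge>0} Pr[T > m]\<close>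
  (this is \<infinity> if the optimum is not found with probability 1).\<close>
definition exp_runtime :: "nat \<Rightarrow> nat \<Rightarrow> (bool list \<Rightarrow> nat) \<Rightarrow> alg1 \<Rightarrow> ennreal" where
  "exp_runtime n lam f A = (\<Sum>m. 1 - runtime_le n lam f A m)"

definition exp_gens :: "nat \<Rightarrow> nat \<Rightarrow> (bool list \<Rightarrow> nat) \<Rightarrow> alg1 \<Rightarrow> ennreal" where
  "exp_gens n lam f A = (\<Sum>k. 1 - gens_le n lam f A k)"

definition LV_complexity_OM :: "nat \<Rightarrow> nat \<Rightarrow> ennreal" where
  "LV_complexity_OM n lam =
     (INF A \<in> {A. valid_alg1 n lam A}. SUP z \<in> {z. length z = n}. exp_runtime n lam (om z) A)"

end

theory Submission
  imports Defs
begin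

text \<open>The parent always has the form \<open>p @ [True, False, ..., False]\<close> where \<open>p\<close> is a
  prefix of the target \<open>z\<close>; the trailing marker lets the prefix be read off the parent
  itself, so the algorithm needs no memory. A generation appends to \<open>p\<close> every one of the
  \<open>2^K \<le> \<lambda>\<close> possible next blocks of \<open>K\<close> bits, padded with a shorter marker. All offspring share
  \<open>p\<close> and the padding, so the fittest offspring is exactly the one carrying the correct block
  of \<open>z\<close>: every generation deterministically learns \<open>K = \<lfloor>log\<^sub>2 \<lambda>\<rfloor>\<close> further bits, and the optimum
  is sampled after \<open>\<lceil>n / K\<rceil>\<close> generations.\<close>

definition hamming :: "bool list \<Rightarrow> bool list \<Rightarrow> nat" where
  "hamming x y = length (filter (\<lambda>(u, v). u \<noteq> v) (zip x y))"

lemma card_mismatch_eq_hamming: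
  "length x = length y \<Longrightarrow> card {i. i < length y \<and> x ! i \<noteq> y ! i} = hamming x y"
  unfolding hamming_def length_filter_conv_card
  by (auto intro!: arg_cong[where f = card] simp: nth_zip)

lemma om_eq_length_minus_hamming: "length y = length z \<Longrightarrow> om z y = length z - hamming y z"
  unfolding om_def using card_mismatch_eq_hamming[of y z] by simp

lemma hamming_append:
  "length x = length y \<Longrightarrow> hamming (x @ u) (y @ v) = hamming x y + hamming u v"
  by (simp add: hamming_def zip_append)

lemma hamming_self [simp]: "hamming x x = 0"
  by (induction x) (auto simp: hamming_def)

lemma hamming_le_length: "hamming x y \<le> length y"
  unfolding hamming_def by (rule order_trans[OF length_filter_le]) simp

lemma hamming_eq_0_iff: "length x = length y \<Longrightarrow> hamming x y = 0 \<longleftrightarrow> x = y"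
  by (induction x y rule: list_induct2) (auto simp: hamming_def)

lemma is_opt_om_iff: "length z = n \<Longrightarrow> is_opt n (om z) y \<longleftrightarrow> y = z"
proof
  assume lz: "length z = n" and opt: "is_opt n (om z) y"
  then have ly: "length y = n" and "om z z \<le> om z y"
    by (auto simp: is_opt_def)
  with lz have "hamming y z = 0"
    using om_eq_length_minus_hamming[of y z] om_eq_length_minus_hamming[of z z]
      hamming_le_length[of y z] by simp
  with lz ly show "y = z" by (simp add: hamming_eq_0_iff)
next
  assume "length z = n" and "y = z"
  then show "is_opt n (om z) y"
    using om_eq_length_minus_hamming hamming_eq_0_iff by (simp add: is_opt_def om_def)
qed

lemma block_eq_if_om_ge:
  assumes z: "z = p @ b @ s" and lb: "length b' = length b" and lr: "length r = length s"
    and ge: "om z (p @ b @ r) \<le> om z (p @ b' @ r)"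
  shows "b' = b"
proof -
  have split: "hamming (p @ c @ r) z = hamming c b + hamming r s" if "length c = length b" for c
    using that lr z by (simp add: hamming_append)
  have "hamming (p @ b' @ r) z \<le> hamming (p @ b @ r) z"
    using ge z lb lr hamming_le_length[of "p @ b' @ r" z]
    by (simp add: om_eq_length_minus_hamming)
  then have "hamming b' b = 0"
    using split[OF lb] split[of b] by simp
  with lb show ?thesis by (simp add: hamming_eq_0_iff)
qed

definition bit_words :: "nat \<Rightarrow> bool list list" where
  "bit_words j = List.n_lists j [True, False]"

lemma set_bit_words: "set (bit_words j) = {w. length w = j}"
  by (auto simp: bit_words_def set_n_lists)

lemma length_bit_words: "length (bit_words j) = 2 ^ j"
  by (induction j) (auto simp: bit_words_def length_concat comp_def sum_list_triv)

definition marker :: "nat \<Rightarrow> bool list" where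
  "marker m = (if m = 0 then [] else True # replicate (m - 1) False)"

lemma length_marker [simp]: "length (marker m) = m"
  by (simp add: marker_def)

definition strip_marker :: "bool list \<Rightarrow> bool list" where
  "strip_marker x = rev (tl (dropWhile Not (rev x)))"

lemma strip_marker_append_marker: "m > 0 \<Longrightarrow> strip_marker (p @ marker m) = p"
proof -
  have "dropWhile Not (replicate k False @ True # q) = True # q" for k q
    by (induction k) auto
  then show "m > 0 \<Longrightarrow> ?thesis" by (simp add: strip_marker_def marker_def)
qed

lemma length_strip_marker_le: "length (strip_marker x) \<le> length x"
  using length_dropWhile_le[of Not "rev x"] by (simp add: strip_marker_def)

definition offspring :: "nat \<Rightarrow> nat \<Rightarrow> nat \<Rightarrow> bool list \<Rightarrow> bool list list" where
  "offspring n lam K x =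
     (let p = strip_marker x; j = min K (n - length p)
      in map (\<lambda>c. p @ bit_words j ! (c mod 2 ^ j) @ marker (n - length p - j)) [0..<lam])"

definition select_best :: "nat \<Rightarrow> (nat \<times> nat) set \<Rightarrow> nat" where
  "select_best lam R = (LEAST i. i < lam \<and> (\<forall>j<lam. (j, i) \<in> R))"

definition prefix_alg :: "nat \<Rightarrow> nat \<Rightarrow> nat \<Rightarrow> alg1" where
  "prefix_alg n lam K =
     \<lparr>a_init = return_pmf (marker n),
      a_off = (\<lambda>x. return_pmf (offspring n lam K x)),
      a_sel = (\<lambda>x ys R. return_pmf (select_best lam R))\<rparr>"

lemma bit_words_mod_mem: "bit_words j ! (c mod 2 ^ j) \<in> set (bit_words j)"
  by (rule nth_mem) (simp add: length_bit_words)

lemma length_offspring: "length (offspring n lam K x) = lam"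
  by (simp add: offspring_def Let_def)

lemma length_offspring_elem:
  assumes "length x = n" "y \<in> set (offspring n lam K x)"
  shows "length y = n"
  using assms length_strip_marker_le[of x] bit_words_mod_mem
  by (auto simp: offspring_def Let_def set_bit_words)

lemma select_best_is_best:
  fixes f :: "bool list \<Rightarrow> nat"
  assumes "length ys = lam" "lam > 0"
  shows "select_best lam (rank f ys) < lam \<and>
    (\<forall>j<lam. f (ys ! j) \<le> f (ys ! select_best lam (rank f ys)))"
proof -
  let ?S = "(\<lambda>j. f (ys ! j)) ` {..<lam}"
  have "Max ?S \<in> ?S" using assms by (intro Max_in) auto
  then obtain i where i: "i < lam" "f (ys ! i) = Max ?S" by auto
  then have "\<exists>i. i < lam \<and> (\<forall>j<lam. (j, i) \<in> rank f ys)"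
    using assms by (auto simp: rank_def intro: Max_ge)
  from LeastI_ex[OF this] show ?thesis
    using assms by (auto simp: rank_def select_best_def)
qed

lemma valid_prefix_alg:
  assumes "lam > 0"
  shows "valid_alg1 n lam (prefix_alg n lam K)"
  unfolding valid_alg1_def
proof (intro conjI allI impI ballI)
  fix x ys assume "length x = n" "ys \<in> set_pmf (a_off (prefix_alg n lam K) x)"
  then show "length ys = lam" and "\<And>y. y \<in> set ys \<Longrightarrow> length y = n"
    by (auto simp: prefix_alg_def length_offspring intro: length_offspring_elem)
next
  fix x :: "bool list" and ys :: "bool list list" and f :: "bool list \<Rightarrow> nat"
  assume "length ys = lam"
  then show "set_pmf (a_sel (prefix_alg n lam K) x ys (rank f ys))
      \<subseteq> {i. i < lam \<and> (\<forall>j<lam. f (ys ! j) \<le> f (ys ! i))}"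
    using select_best_is_best[of ys lam f] assms by (simp add: prefix_alg_def)
qed (simp add: prefix_alg_def)

lemma state1_Inr_imp_runtime_le_eq_1:
  assumes "state1 n lam f A t = return_pmf (Inr (r, g))" "r \<le> m"
  shows "runtime_le n lam f A m = 1"
  unfolding runtime_le_def
proof (rule antisym)
  have "measure_pmf.prob (state1 n lam f A t) {s. \<exists>r g. s = Inr (r, g) \<and> r \<le> m} = 1"
    using assms by simp
  then show "1 \<le> (SUP t. ennreal (measure_pmf.prob (state1 n lam f A t)
              {s. \<exists>r g. s = Inr (r, g) \<and> r \<le> m}))"
    by (intro SUP_upper2[of t]) simp_all
qed (simp add: SUP_least)

lemma state1_Inr_imp_gens_le_eq_1:
  assumes "state1 n lam f A t = return_pmf (Inr (r, g))" "g \<le> k"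
  shows "gens_le n lam f A k = 1"
  unfolding gens_le_def
proof (rule antisym)
  have "measure_pmf.prob (state1 n lam f A t) {s. \<exists>r g. s = Inr (r, g) \<and> g \<le> k} = 1"
    using assms by simp
  then show "1 \<le> (SUP t. ennreal (measure_pmf.prob (state1 n lam f A t)
              {s. \<exists>r g. s = Inr (r, g) \<and> g \<le> k}))"
    by (intro SUP_upper2[of t]) simp_all
qed (simp add: SUP_least)

lemma state1_Inr_imp_exp_runtime_le:
  assumes "state1 n lam f A t = return_pmf (Inr (r, g))"
  shows "exp_runtime n lam f A \<le> of_nat r"
proof -
  have "exp_runtime n lam f A = (\<Sum>m<r. 1 - runtime_le n lam f A m)"
    unfolding exp_runtime_def
  proof (rule suminf_finite)
    fix m assume "m \<notin> {..<r}"
    then have "runtime_le n lam f A m = 1"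
      by (intro state1_Inr_imp_runtime_le_eq_1[OF assms]) simp
    then show "1 - runtime_le n lam f A m = 0" by simp
  qed simp
  also have "\<dots> \<le> (\<Sum>m<r. 1)" by (intro sum_mono) simp
  finally show ?thesis by simp
qed

lemma state1_Inr_imp_exp_gens_le:
  assumes "state1 n lam f A t = return_pmf (Inr (r, g))"
  shows "exp_gens n lam f A \<le> of_nat g"
proof -
  have "exp_gens n lam f A = (\<Sum>k<g. 1 - gens_le n lam f A k)"
    unfolding exp_gens_def
  proof (rule suminf_finite)
    fix k assume "k \<notin> {..<g}"
    then have "gens_le n lam f A k = 1"
      by (intro state1_Inr_imp_gens_le_eq_1[OF assms]) simp
    then show "1 - gens_le n lam f A k = 0" by simp
  qed simp
  also have "\<dots> \<le> (\<Sum>k<g. 1)" by (intro sum_mono) simp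
  finally show ?thesis by simp
qed

lemma step1_Inl_return_pmf:
  assumes "a_off A x = return_pmf ys" "a_sel A x ys (rank f ys) = return_pmf i"
  shows "step1 n lam f A t (Inl x) =
    (if \<exists>y \<in> set ys. is_opt n f y
     then return_pmf (Inr (1 + lam * t + Suc (LEAST k. k < length ys \<and> is_opt n f (ys ! k)), Suc t))
     else return_pmf (Inl (ys ! i)))"
  using assms by (simp add: step1_def bind_return_pmf)

lemma Least_nth_less_length: "\<exists>y \<in> set ys. P y \<Longrightarrow> (LEAST k. k < length ys \<and> P (ys ! k)) < length ys"
  by (metis (mono_tags, lifting) LeastI_ex in_set_conv_nth)

context
  fixes n lam K :: nat and z :: "bool list"
  assumes length_z: "length z = n" and K_pos: "1 \<le> K" and pow_K_le: "2 ^ K \<le> lam"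
begin

lemma nth_offspring_prefix:
  assumes "i < n" "c < lam"
  shows "offspring n lam K (take i z @ marker (n - i)) ! c =
    take i z @ bit_words (min K (n - i)) ! (c mod 2 ^ min K (n - i)) @ marker (n - i - min K (n - i))"
  using assms length_z by (simp add: offspring_def Let_def strip_marker_append_marker)

lemma step1_prefix:
  assumes "i < n"
  shows "\<exists>s. step1 n lam (om z) (prefix_alg n lam K) t (Inl (take i z @ marker (n - i))) = return_pmf s \<and>
    (s = Inl (take (i + K) z @ marker (n - (i + K))) \<and> i + K < n \<or>
     (\<exists>r. s = Inr (r, Suc t) \<and> r \<le> 1 + lam * Suc t))"
proof -
  define p where "p = take i z"
  define j where "j = min K (n - i)"
  define b where "b = take j (drop i z)"
  define pad where "pad = marker (n - i - j)"
  define ys where "ys = offspring n lam K (p @ marker (n - i))"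
  have ys_nth: "ys ! c = p @ bit_words j ! (c mod 2 ^ j) @ pad" if "c < lam" for c
    using nth_offspring_prefix[OF assms that] by (simp add: ys_def p_def j_def pad_def)
  have length_ys: "length ys = lam" by (simp add: ys_def length_offspring)
  have p_b: "take (i + j) z = p @ b" by (simp add: p_def b_def take_add)
  then have z: "z = p @ b @ drop (i + j) z" by (metis append_take_drop_id append_assoc)
  have "j \<le> K" "i + j \<le> n" and lb: "length b = j"
    using assms length_z by (auto simp: j_def b_def)
  then have "2 ^ j \<le> lam" using pow_K_le power_increasing[of j K "2::nat"] by linarith
  moreover have "b \<in> set (bit_words j)" using lb by (simp add: set_bit_words)
  then obtain c where c: "c < 2 ^ j" "bit_words j ! c = b"
    by (auto simp: in_set_conv_nth length_bit_words)
  ultimately have c_lam: "c < lam" and ys_c: "ys ! c = p @ b @ pad"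
    by (simp_all add: ys_nth)
  define sel where "sel = select_best lam (rank (om z) ys)"
  have step: "step1 n lam (om z) (prefix_alg n lam K) t (Inl (p @ marker (n - i))) =
     (if \<exists>y \<in> set ys. is_opt n (om z) y
      then return_pmf (Inr (1 + lam * t + Suc (LEAST k. k < length ys \<and> is_opt n (om z) (ys ! k)), Suc t))
      else return_pmf (Inl (ys ! sel)))"
    by (rule step1_Inl_return_pmf) (simp_all add: prefix_alg_def ys_def sel_def)
  show ?thesis
  proof (cases "\<exists>y \<in> set ys. is_opt n (om z) y")
    case True
    with step show ?thesis
      using Least_nth_less_length[OF True] length_ys unfolding p_def by auto
  next
    case False
    then have "ys ! c \<noteq> z"
      using c_lam length_ys is_opt_om_iff[OF length_z] nth_mem by blast
    then have "i + j \<noteq> n"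
      using ys_c p_b length_z by (auto simp: pad_def marker_def)
    then have j: "j = K" and progress: "i + K < n" using assms by (auto simp: j_def)
    define b' where "b' = bit_words j ! (sel mod 2 ^ j)"
    have "sel < lam" and best: "om z (ys ! c) \<le> om z (ys ! sel)"
      using select_best_is_best[OF length_ys, of "om z"] c_lam by (auto simp: sel_def)
    then have ys_sel: "ys ! sel = p @ b' @ pad" by (simp add: ys_nth b'_def)
    have "length b' = length b"
      using bit_words_mod_mem[of j sel] lb by (simp add: b'_def set_bit_words)
    then have "b' = b"
      using block_eq_if_om_ge[OF z _ _ best[unfolded ys_c ys_sel]] length_z lb by (simp add: pad_def)
    then have "ys ! sel = take (i + K) z @ marker (n - (i + K))"
      using ys_sel p_b j by (simp add: pad_def)
    with False step progress show ?thesis unfolding p_def by simp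
  qed
qed

lemma state1_prefix_alg:
  "\<exists>s. state1 n lam (om z) (prefix_alg n lam K) t = return_pmf s \<and>
     (s = Inl (take (t * K) z @ marker (n - t * K)) \<and> t * K < n \<or>
      (\<exists>r g. s = Inr (r, g) \<and> r \<le> 1 + lam * g \<and> g * K < n + K))"
proof (induction t)
  case 0
  have "marker n = z \<or> 0 < n" using length_z by (cases n) (auto simp: marker_def)
  with K_pos show ?case by (auto simp: prefix_alg_def is_opt_om_iff[OF length_z])
next
  case (Suc t)
  then obtain s where s: "state1 n lam (om z) (prefix_alg n lam K) t = return_pmf s" and
    inv: "s = Inl (take (t * K) z @ marker (n - t * K)) \<and> t * K < n \<or>
      (\<exists>r g. s = Inr (r, g) \<and> r \<le> 1 + lam * g \<and> g * K < n + K)" by blast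
  have "state1 n lam (om z) (prefix_alg n lam K) (Suc t) = step1 n lam (om z) (prefix_alg n lam K) t s"
    using s by (simp add: bind_return_pmf)
  with inv step1_prefix[of "t * K" t] show ?case
    by (auto simp: step1_def add.commute)
qed

lemma prefix_alg_hits_optimum:
  assumes "n \<le> G * K"
  obtains r g where "state1 n lam (om z) (prefix_alg n lam K) G = return_pmf (Inr (r, g))"
    "r \<le> 1 + lam * G" "g \<le> G"
proof -
  obtain r g where rg: "state1 n lam (om z) (prefix_alg n lam K) G = return_pmf (Inr (r, g))"
    "r \<le> 1 + lam * g" "g * K < n + K"
    using state1_prefix_alg[of G] assms by auto
  then have "g * K < Suc G * K" using assms by simp
  then have "g \<le> G" by (metis less_Suc_eq_le mult_less_cancel2)
  moreover have "r \<le> 1 + lam * G" using rg(2) \<open>g \<le> G\<close> mult_le_mono2[of g G lam] by linarith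
  ultimately show thesis using that rg(1) by blast
qed

lemma prefix_alg_bounds:
  assumes "n \<le> G * K"
  shows "exp_runtime n lam (om z) (prefix_alg n lam K) \<le> of_nat (1 + lam * G)"
    and "exp_gens n lam (om z) (prefix_alg n lam K) \<le> of_nat G"
    and "G \<le> k \<Longrightarrow> gens_le n lam (om z) (prefix_alg n lam K) k = 1"
proof -
  obtain r g where hit: "state1 n lam (om z) (prefix_alg n lam K) G = return_pmf (Inr (r, g))"
    and r: "r \<le> 1 + lam * G" and g: "g \<le> G"
    using prefix_alg_hits_optimum[OF assms] .
  have "exp_runtime n lam (om z) (prefix_alg n lam K) \<le> of_nat r"
    using state1_Inr_imp_exp_runtime_le[OF hit] .
  also have "(of_nat r :: ennreal) \<le> of_nat (1 + lam * G)" using r by (rule of_nat_mono)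
  finally show "exp_runtime n lam (om z) (prefix_alg n lam K) \<le> of_nat (1 + lam * G)" .
  have "exp_gens n lam (om z) (prefix_alg n lam K) \<le> of_nat g"
    using state1_Inr_imp_exp_gens_le[OF hit] .
  also have "(of_nat g :: ennreal) \<le> of_nat G" using g by (rule of_nat_mono)
  finally show "exp_gens n lam (om z) (prefix_alg n lam K) \<le> of_nat G" .
  show "G \<le> k \<Longrightarrow> gens_le n lam (om z) (prefix_alg n lam K) k = 1"
    using state1_Inr_imp_gens_le_eq_1[OF hit] g by simp
qed

end

lemma floor_log2_bounds:
  assumes "(lam :: nat) \<ge> 2"
  shows "1 \<le> nat \<lfloor>log 2 (real lam)\<rfloor>" and "2 ^ nat \<lfloor>log 2 (real lam)\<rfloor> \<le> lam"
proof -
  define K where "K = nat \<lfloor>log 2 (real lam)\<rfloor>"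
  have "1 \<le> log 2 (real lam)" using assms by (simp add: le_log_iff)
  then have "1 \<le> \<lfloor>log 2 (real lam)\<rfloor>" by (simp add: le_floor_iff)
  then show "1 \<le> K" by (simp add: K_def le_nat_iff)
  have "real K = of_int \<lfloor>log 2 (real lam)\<rfloor>" using \<open>1 \<le> \<lfloor>log 2 (real lam)\<rfloor>\<close> by (simp add: K_def)
  then have "real K \<le> log 2 (real lam)" by simp
  then have "2 powr real K \<le> real lam" using assms by (simp add: le_log_iff)
  then show "2 ^ K \<le> lam" by (simp add: powr_realpow flip: of_nat_le_iff)
qed

lemma le_ceiling_divide_mult:
  assumes "(K :: nat) \<ge> 1"
  shows "n \<le> nat \<lceil>real n / real K\<rceil> * K"
proof -
  have "0 \<le> real n / real K" by simp
  then have ceiling_nonneg: "0 \<le> \<lceil>real n / real K\<rceil>" by (simp only: zero_le_ceiling)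
  have "real n / real K \<le> of_int \<lceil>real n / real K\<rceil>" by simp
  then have "real n \<le> of_int \<lceil>real n / real K\<rceil> * real K"
    using assms by (subst pos_divide_le_eq[symmetric]) simp_all
  moreover have "real (nat \<lceil>real n / real K\<rceil> * K) = of_int \<lceil>real n / real K\<rceil> * real K"
    using ceiling_nonneg by simp
  ultimately show ?thesis by (metis of_nat_le_iff)
qed

lemma prefix_alg_1_2_bounds:
  assumes "length z = n"
  shows "exp_runtime n 2 (om z) (prefix_alg n 2 1) \<le> ennreal (2 * real n + 1)"
    and "gens_le n 2 (om z) (prefix_alg n 2 1) (n + 1) = 1"
proof -
  have "exp_runtime n 2 (om z) (prefix_alg n 2 1) \<le> of_nat (1 + 2 * n)"
    using prefix_alg_bounds(1)[OF assms, of 1 2 n] by simp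
  also have "(of_nat (1 + 2 * n) :: ennreal) = ennreal (2 * real n + 1)"
    by (simp add: ennreal_of_nat_eq_real_of_nat)
  finally show "exp_runtime n 2 (om z) (prefix_alg n 2 1) \<le> ennreal (2 * real n + 1)" .
  show "gens_le n 2 (om z) (prefix_alg n 2 1) (n + 1) = 1"
    using prefix_alg_bounds(3)[OF assms, of 1 2 n] by simp
qed

lemma prefix_alg_floor_log2_bounds:
  assumes "lam \<ge> 2" "length z = n"
  defines "K \<equiv> nat \<lfloor>log 2 (real lam)\<rfloor>"
  shows "exp_gens n lam (om z) (prefix_alg n lam K) \<le> of_nat (nat \<lceil>real n / real K\<rceil>)"
    and "gens_le n lam (om z) (prefix_alg n lam K) (nat \<lceil>real n / real K\<rceil>) = 1"
proof -
  have K: "1 \<le> K" "2 ^ K \<le> lam" using floor_log2_bounds[OF assms(1)] by (simp_all add: K_def)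
  have "n \<le> nat \<lceil>real n / real K\<rceil> * K" using K(1) by (rule le_ceiling_divide_mult)
  with assms(2) K show "exp_gens n lam (om z) (prefix_alg n lam K) \<le> of_nat (nat \<lceil>real n / real K\<rceil>)"
    and "gens_le n lam (om z) (prefix_alg n lam K) (nat \<lceil>real n / real K\<rceil>) = 1"
    by (simp_all add: prefix_alg_bounds)
qed

theorem theorem7:
  fixes n :: nat
  shows "LV_complexity_OM n 2 \<le> ennreal (2 * real n + 1) \<and>
    (\<exists>A. valid_alg1 n 2 A \<and>
       (\<forall>z. length z = n \<longrightarrow>
          exp_runtime n 2 (om z) A \<le> ennreal (2 * real n + 1) \<and>
          gens_le n 2 (om z) A (n + 1) = 1)) \<and>
    (\<forall>lam \<ge> 2. \<exists>A. valid_alg1 n lam A \<and>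
       (\<forall>z. length z = n \<longrightarrow>
          exp_gens n lam (om z) A \<le> of_nat (nat \<lceil>real n / real (nat \<lfloor>log 2 (real lam)\<rfloor>)\<rceil>))) \<and>
    (\<forall>lam \<ge> 2. \<exists>A. valid_alg1 n lam A \<and>
       (\<forall>z. length z = n \<longrightarrow>
          gens_le n lam (om z) A (nat \<lceil>real n / real (nat \<lfloor>log 2 (real lam)\<rfloor>)\<rceil>) = 1))"
proof -
  have valid2: "valid_alg1 n 2 (prefix_alg n 2 1)" by (rule valid_prefix_alg) simp
  then have "LV_complexity_OM n 2 \<le> ennreal (2 * real n + 1)"
    unfolding LV_complexity_OM_def using prefix_alg_1_2_bounds(1)
    by (intro INF_lower2[of "prefix_alg n 2 1"] SUP_least) auto
  moreover have "\<exists>A. valid_alg1 n 2 A \<and> (\<forall>z. length z = n \<longrightarrow>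
      exp_runtime n 2 (om z) A \<le> ennreal (2 * real n + 1) \<and> gens_le n 2 (om z) A (n + 1) = 1)"
    using valid2 prefix_alg_1_2_bounds by blast
  moreover have "\<exists>A. valid_alg1 n lam A \<and> (\<forall>z. length z = n \<longrightarrow>
      exp_gens n lam (om z) A \<le> of_nat (nat \<lceil>real n / real (nat \<lfloor>log 2 (real lam)\<rfloor>)\<rceil>) \<and>
      gens_le n lam (om z) A (nat \<lceil>real n / real (nat \<lfloor>log 2 (real lam)\<rfloor>)\<rceil>) = 1)"
    if "lam \<ge> 2" for lam
    using valid_prefix_alg[OF order.strict_trans2[OF pos2 that]] prefix_alg_floor_log2_bounds[OF that, of _ n]
    by (intro exI[of _ "prefix_alg n lam (nat \<lfloor>log 2 (real lam)\<rfloor>)"]) blast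
  ultimately show ?thesis by meson
qed

end
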